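(* For $n\geq 2$, the number of 2-Jacobi subsets of $S_n$ equals $2^{(n-1)!\cdot(n-1)}$.
   Context: The left-normed bracket is $[a_1]=a_1$, $[a_1,\dots,a_n]=[[a_1,\dots,a_{n-1}],a_n]$. $S_n$ is the symmetric group on $\{1,\dots,n\}$. A subset $T\subseteq S_n$ is 2-Jacobi if $\sum_{\sigma\in T}[a_{\sigma(1)},\dots,a_{\sigma(n)}]=0$ for all elements $a_1,\dots,a_n$ of every Lie algebra over the field $\mathbb Z/2$. *)

theory Defs
  imports "HOL-Algebra.Ring" "HOL-Combinatorics.Permutations"
begin

text \<open>A Lie algebra over the field Z/2: an abelian group (carrier, addition, zero)
of exponent 2 (i.e. a Z/2-vector space), with a bracket that is closed,
biadditive (= Z/2-bilinear), alternating and satisfies the Jacobi identity.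
The multiplicative part of the ring record is unused.\<close>

definition lie_algebra_Z2 :: "'a ring \<Rightarrow> ('a \<Rightarrow> 'a \<Rightarrow> 'a) \<Rightarrow> bool" where
  "lie_algebra_Z2 R br \<longleftrightarrow>
     abelian_group R \<and>
     (\<forall>x\<in>carrier R. x \<oplus>\<^bsub>R\<^esub> x = \<zero>\<^bsub>R\<^esub>) \<and>
     (\<forall>x\<in>carrier R. \<forall>y\<in>carrier R. br x y \<in> carrier R) \<and>
     (\<forall>x\<in>carrier R. \<forall>y\<in>carrier R. \<forall>z\<in>carrier R.
        br (x \<oplus>\<^bsub>R\<^esub> y) z = br x z \<oplus>\<^bsub>R\<^esub> br y z) \<and>
     (\<forall>x\<in>carrier R. \<forall>y\<in>carrier R. \<forall>z\<in>carrier R.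
        br x (y \<oplus>\<^bsub>R\<^esub> z) = br x y \<oplus>\<^bsub>R\<^esub> br x z) \<and>
     (\<forall>x\<in>carrier R. br x x = \<zero>\<^bsub>R\<^esub>) \<and>
     (\<forall>x\<in>carrier R. \<forall>y\<in>carrier R. \<forall>z\<in>carrier R.
        br (br x y) z \<oplus>\<^bsub>R\<^esub> br (br y z) x \<oplus>\<^bsub>R\<^esub> br (br z x) y = \<zero>\<^bsub>R\<^esub>)"

fun lbracket :: "('a \<Rightarrow> 'a \<Rightarrow> 'a) \<Rightarrow> 'a list \<Rightarrow> 'a" where
  "lbracket br [] = undefined"
| "lbracket br (x # xs) = foldl br x xs"

text \<open>Lie algebras are taken
with carrier a subset of nat; this suffices since the subalgebra generated by
finitely many elements of a Lie algebra over Z/2 is countable.\<close>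
definition two_jacobi :: "nat \<Rightarrow> (nat \<Rightarrow> nat) set \<Rightarrow> bool" where
  "two_jacobi n T \<longleftrightarrow>
     T \<subseteq> {\<sigma>. \<sigma> permutes {1..n}} \<and>
     (\<forall>(R :: nat ring) br. lie_algebra_Z2 R br \<longrightarrow>
        (\<forall>a. (\<forall>i\<in>{1..n}. a i \<in> carrier R) \<longrightarrow>
           finsum R (\<lambda>\<sigma>. lbracket br (map (\<lambda>i. a (\<sigma> i)) [1..<n+1])) T = \<zero>\<^bsub>R\<^esub>))"

end

theory Submission
  imports Defs
begin

(* Over Z/2 the Jacobi identity reads [x,[u,b]] = [[x,u],b] + [[x,b],u]. Applying it repeatedly to
   [a_xs, a_1] rewrites the left-normed bracket of a word xs 1 ys as a sum of left-normed brackets of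
   words 1 s ys, so for every T the sum over T equals the sum over an explicit set R(T) of
   permutations fixing 1. These (n-1)! brackets are linearly independent: in the Lie algebra of
   commutators of linear operators on formal sums of words, where a_i prepends the letter i, the
   word tau(1) ... tau(n) occurs in the bracket of tau applied to the empty word and in no other.
   Hence T is 2-Jacobi iff R(T) is empty. Since R is additive and the identity on permutations
   fixing 1, such T correspond to arbitrary sets A of permutations not fixing 1, via T = A + R(A);
   there are 2^(n! - (n-1)!) of them. *)

section \<open>Lie algebras over Z/2\<close>

locale Z2_lie_algebra = abelian_group R for R :: "('a, 'b) ring_scheme" (structure) +
  fixes br :: "'a \<Rightarrow> 'a \<Rightarrow> 'a"
  assumes add_self: "x \<in> carrier R \<Longrightarrow> x \<oplus> x = \<zero>"
    and bracket_closed: "x \<in> carrier R \<Longrightarrow> y \<in> carrier R \<Longrightarrow> br x y \<in> carrier R"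
    and bracket_add_left: "x \<in> carrier R \<Longrightarrow> y \<in> carrier R \<Longrightarrow> z \<in> carrier R \<Longrightarrow>
      br (x \<oplus> y) z = br x z \<oplus> br y z"
    and bracket_add_right: "x \<in> carrier R \<Longrightarrow> y \<in> carrier R \<Longrightarrow> z \<in> carrier R \<Longrightarrow>
      br x (y \<oplus> z) = br x y \<oplus> br x z"
    and bracket_self: "x \<in> carrier R \<Longrightarrow> br x x = \<zero>"
    and jacobi: "x \<in> carrier R \<Longrightarrow> y \<in> carrier R \<Longrightarrow> z \<in> carrier R \<Longrightarrow>
      br (br x y) z \<oplus> br (br y z) x \<oplus> br (br z x) y = \<zero>"

lemma Z2_lie_algebraI: "lie_algebra_Z2 R br \<Longrightarrow> Z2_lie_algebra R br"
  unfolding lie_algebra_Z2_def Z2_lie_algebra_def Z2_lie_algebra_axioms_def by blast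

context Z2_lie_algebra
begin

lemma add_eq_zero_imp_eq:
  assumes x: "x \<in> carrier R" and y: "y \<in> carrier R" and xy: "x \<oplus> y = \<zero>"
  shows "x = y"
proof -
  have "x = x \<oplus> (y \<oplus> y)" using x y by (simp add: add_self)
  also have "\<dots> = (x \<oplus> y) \<oplus> y" using x y by (simp add: a_assoc)
  also have "\<dots> = y" using xy y by simp
  finally show ?thesis .
qed

lemma bracket_commute:
  assumes x: "x \<in> carrier R" and y: "y \<in> carrier R"
  shows "br x y = br y x"
proof (rule add_eq_zero_imp_eq)
  have "\<zero> = br (x \<oplus> y) (x \<oplus> y)" using x y by (simp add: bracket_self)
  also have "\<dots> = br x (x \<oplus> y) \<oplus> br y (x \<oplus> y)"
    using x y by (intro bracket_add_left) auto
  also have "\<dots> = (br x x \<oplus> br x y) \<oplus> (br y x \<oplus> br y y)"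
    using x y by (simp add: bracket_add_right)
  also have "\<dots> = br x y \<oplus> br y x" using x y by (simp add: bracket_self bracket_closed)
  finally show "br x y \<oplus> br y x = \<zero>" by (rule sym)
qed (use x y in \<open>simp_all add: bracket_closed\<close>)

lemma bracket_zero_left:
  assumes y: "y \<in> carrier R"
  shows "br \<zero> y = \<zero>"
proof -
  have "br \<zero> y = br (\<zero> \<oplus> \<zero>) y" by simp
  also have "\<dots> = br \<zero> y \<oplus> br \<zero> y" using y by (intro bracket_add_left) auto
  also have "\<dots> = \<zero>" using y by (simp add: add_self bracket_closed)
  finally show ?thesis .
qed

lemma bracket_bracket_right:
  assumes x: "x \<in> carrier R" and u: "u \<in> carrier R" and b: "b \<in> carrier R"
  shows "br x (br u b) = br (br x u) b \<oplus> br (br x b) u"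
proof -
  have "br (br u b) x = br (br b x) u \<oplus> br (br x u) b"
    by (rule add_eq_zero_imp_eq) (use jacobi[OF u b x] x u b in \<open>auto simp: bracket_closed a_assoc\<close>)
  then show ?thesis
    using x u b by (simp add: bracket_commute[of x "br u b"] bracket_commute[of b x] bracket_closed a_comm)
qed

lemma bracket_finsum_left:
  "finite A \<Longrightarrow> f \<in> A \<rightarrow> carrier R \<Longrightarrow> y \<in> carrier R \<Longrightarrow>
    br (finsum R f A) y = finsum R (\<lambda>s. br (f s) y) A"
proof (induction A rule: finite_induct)
  case empty
  then show ?case by (simp add: bracket_zero_left)
next
  case (insert x F)
  then show ?case by (simp add: bracket_add_left finsum_closed bracket_closed Pi_def)
qed

lemma foldl_bracket_closed:
  "x \<in> carrier R \<Longrightarrow> set ys \<subseteq> carrier R \<Longrightarrow> foldl br x ys \<in> carrier R"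
  by (induction ys arbitrary: x) (auto simp: bracket_closed)

lemma lbracket_closed: "xs \<noteq> [] \<Longrightarrow> set xs \<subseteq> carrier R \<Longrightarrow> lbracket br xs \<in> carrier R"
  by (cases xs) (auto intro: foldl_bracket_closed)

lemma foldl_bracket_finsum:
  "finite A \<Longrightarrow> f \<in> A \<rightarrow> carrier R \<Longrightarrow> set ys \<subseteq> carrier R \<Longrightarrow>
    foldl br (finsum R f A) ys = finsum R (\<lambda>s. foldl br (f s) ys) A"
proof (induction ys arbitrary: f)
  case Nil
  then show ?case by simp
next
  case (Cons y ys)
  have "foldl br (finsum R f A) (y # ys) = foldl br (finsum R (\<lambda>s. br (f s) y) A) ys"
    using Cons.prems by (simp add: bracket_finsum_left)
  also have "\<dots> = finsum R (\<lambda>s. foldl br (br (f s) y) ys) A"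
    using Cons.prems by (intro Cons.IH) (auto simp: bracket_closed Pi_def)
  finally show ?case by simp
qed

lemma finsum_sym_diff:
  assumes A: "finite A" and B: "finite B" and f: "f \<in> A \<union> B \<rightarrow> carrier R"
  shows "finsum R f (sym_diff A B) = finsum R f A \<oplus> finsum R f B"
proof -
  let ?a = "finsum R f (A - B)" and ?b = "finsum R f (B - A)" and ?c = "finsum R f (A \<inter> B)"
  have abc: "?a \<in> carrier R" "?b \<in> carrier R" "?c \<in> carrier R"
    using f by (auto intro!: finsum_closed)
  have "finsum R f A = finsum R f ((A - B) \<union> (A \<inter> B))" by (simp add: Un_Diff_Int)
  also have "\<dots> = ?a \<oplus> ?c" using A B f by (intro finsum_Un_disjoint) auto
  finally have fA: "finsum R f A = ?a \<oplus> ?c" .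
  have "finsum R f B = finsum R f ((B - A) \<union> (A \<inter> B))" by (metis Int_commute Un_Diff_Int)
  also have "\<dots> = ?b \<oplus> ?c" using A B f by (intro finsum_Un_disjoint) auto
  finally have fB: "finsum R f B = ?b \<oplus> ?c" .
  have "finsum R f (sym_diff A B) = ?a \<oplus> ?b" using A B f by (intro finsum_Un_disjoint) auto
  also have "\<dots> = (?a \<oplus> ?c) \<oplus> (?b \<oplus> ?c)" using abc by (simp add: a_ac add_self)
  finally show ?thesis by (simp only: fA fB)
qed

end

section \<open>Expanding brackets\<close>

(* Formal Z/2-sums of words are represented as sets under symmetric difference. The recursion peels
   off the last letter b of the word, following [x,[v,b]] = [[x,v],b] + [[x,b],v]. *)
fun rev_expansion :: "'a list \<Rightarrow> 'a list set" where
  "rev_expansion [] = {[]}"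
| "rev_expansion [b] = {[b]}"
| "rev_expansion (b # c # r) =
     sym_diff ((\<lambda>s. s @ [b]) ` rev_expansion (c # r)) ((#) b ` rev_expansion (c # r))"

definition expansion :: "'a list \<Rightarrow> 'a list set" where
  "expansion v = rev_expansion (rev v)"

lemma finite_rev_expansion: "finite (rev_expansion r)"
  by (induction r rule: rev_expansion.induct) auto

lemma mset_rev_expansion: "s \<in> rev_expansion r \<Longrightarrow> mset s = mset r"
  by (induction r arbitrary: s rule: rev_expansion.induct) auto

lemma finite_expansion: "finite (expansion v)"
  by (simp add: expansion_def finite_rev_expansion)

lemma mset_expansion: "s \<in> expansion v \<Longrightarrow> mset s = mset v"
  using mset_rev_expansion by (fastforce simp: expansion_def)

lemma expansion_singleton: "expansion [b] = {[b]}"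
  by (simp add: expansion_def)

lemma expansion_snoc:
  "v \<noteq> [] \<Longrightarrow> expansion (v @ [b]) = sym_diff ((\<lambda>s. s @ [b]) ` expansion v) ((#) b ` expansion v)"
  by (cases "rev v") (auto simp: expansion_def)

lemma lbracket_snoc: "xs \<noteq> [] \<Longrightarrow> lbracket br (xs @ [y]) = br (lbracket br xs) y"
  by (cases xs) auto

lemma lbracket_append: "xs \<noteq> [] \<Longrightarrow> lbracket br (xs @ ys) = foldl br (lbracket br xs) ys"
  by (cases xs) auto

context Z2_lie_algebra
begin

lemma foldl_bracket_map_closed:
  "(\<And>i. a i \<in> carrier R) \<Longrightarrow> x \<in> carrier R \<Longrightarrow> foldl br x (map a s) \<in> carrier R"
  by (intro foldl_bracket_closed) auto

lemma finsum_foldl_bracket_snoc_image: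
  assumes "finite W" "\<And>i. a i \<in> carrier R" "x \<in> carrier R"
  shows "finsum R (\<lambda>s. foldl br x (map a s)) ((\<lambda>s. s @ [b]) ` W) =
    br (finsum R (\<lambda>s. foldl br x (map a s)) W) (a b)"
proof -
  have "finsum R (\<lambda>s. foldl br x (map a s)) ((\<lambda>s. s @ [b]) ` W) =
      finsum R (\<lambda>s. br (foldl br x (map a s)) (a b)) W"
    using assms by (subst finsum_reindex) (auto simp: inj_on_def foldl_bracket_map_closed)
  also have "\<dots> = br (finsum R (\<lambda>s. foldl br x (map a s)) W) (a b)"
    using assms by (intro bracket_finsum_left[symmetric]) (auto simp: foldl_bracket_map_closed)
  finally show ?thesis .
qed

lemma finsum_foldl_bracket_Cons_image:
  assumes "\<And>i. a i \<in> carrier R" "x \<in> carrier R"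
  shows "finsum R (\<lambda>s. foldl br x (map a s)) ((#) b ` W) =
    finsum R (\<lambda>s. foldl br (br x (a b)) (map a s)) W"
  using assms by (subst finsum_reindex) (auto simp: inj_on_def foldl_bracket_map_closed)

lemma bracket_lbracket_expansion:
  assumes a: "\<And>i. a i \<in> carrier R"
  shows "v \<noteq> [] \<Longrightarrow> x \<in> carrier R \<Longrightarrow>
    br x (lbracket br (map a v)) = finsum R (\<lambda>s. foldl br x (map a s)) (expansion v)"
proof (induction v arbitrary: x rule: rev_induct)
  case Nil
  then show ?case by simp
next
  case (snoc b v)
  let ?f = "\<lambda>x s. foldl br x (map a s)"
  show ?case
  proof (cases "v = []")
    case True
    then show ?thesis
      using snoc.prems a by (simp add: expansion_singleton bracket_closed)
  next
    case False
    have v: "lbracket br (map a v) \<in> carrier R"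
      using False a by (intro lbracket_closed) auto
    have "br x (lbracket br (map a (v @ [b]))) = br x (br (lbracket br (map a v)) (a b))"
      using False by (simp add: lbracket_snoc)
    also have "\<dots> = br (br x (lbracket br (map a v))) (a b) \<oplus> br (br x (a b)) (lbracket br (map a v))"
      using snoc.prems v a by (intro bracket_bracket_right) auto
    also have "\<dots> = br (finsum R (?f x) (expansion v)) (a b) \<oplus> finsum R (?f (br x (a b))) (expansion v)"
      using snoc.IH[OF False] snoc.prems a by (simp add: bracket_closed)
    also have "\<dots> = finsum R (?f x) ((\<lambda>s. s @ [b]) ` expansion v) \<oplus> finsum R (?f x) ((#) b ` expansion v)"
      using snoc.prems a
      by (simp add: finsum_foldl_bracket_snoc_image finsum_foldl_bracket_Cons_image finite_expansion)
    also have "\<dots> = finsum R (?f x) (expansion (v @ [b]))"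
      using False snoc.prems a
      by (simp add: expansion_snoc finsum_sym_diff finite_expansion foldl_bracket_map_closed)
    finally show ?thesis .
  qed
qed

lemma lbracket_append_Cons_expansion:
  assumes a: "\<And>i. a i \<in> carrier R" and xs: "xs \<noteq> []"
  shows "lbracket br (map a (xs @ c # ys)) =
    finsum R (\<lambda>u. lbracket br (map a u)) ((\<lambda>s. c # s @ ys) ` expansion xs)"
proof -
  have "lbracket br (map a (xs @ c # ys)) = foldl br (lbracket br (map a (xs @ [c]))) (map a ys)"
    using xs lbracket_append[of "map a (xs @ [c])" br "map a ys"] by simp
  also have "lbracket br (map a (xs @ [c])) = br (a c) (lbracket br (map a xs))"
    using xs a by (simp add: lbracket_snoc bracket_commute lbracket_closed image_subset_iff)
  also have "\<dots> = finsum R (\<lambda>s. foldl br (a c) (map a s)) (expansion xs)"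
    using xs a by (intro bracket_lbracket_expansion) auto
  also have "foldl br \<dots> (map a ys) =
      finsum R (\<lambda>s. foldl br (foldl br (a c) (map a s)) (map a ys)) (expansion xs)"
    using a foldl_bracket_map_closed[of a, OF a] by (intro foldl_bracket_finsum) (auto simp: finite_expansion)
  also have "\<dots> = finsum R (\<lambda>s. lbracket br (map a (c # s @ ys))) (expansion xs)"
    by simp
  also have "\<dots> = finsum R (\<lambda>u. lbracket br (map a u)) ((\<lambda>s. c # s @ ys) ` expansion xs)"
    using a foldl_bracket_map_closed[of a, OF a] by (subst finsum_reindex) (auto simp: inj_on_def)
  finally show ?thesis .
qed

end

section \<open>A faithful model: commutators of operators on words\<close>

(* The Z/2-linear endomorphisms of the power set of U; imposing f A = f (A \<inter> U) makes each of
   them determined by its values on Pow U, so that there are only finitely many when U is finite. *)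
definition additive_ops :: "'w set \<Rightarrow> ('w set \<Rightarrow> 'w set) set" where
  "additive_ops U = {f. (\<forall>A. f A \<subseteq> U) \<and> (\<forall>A B. f (sym_diff A B) = sym_diff (f A) (f B)) \<and>
     (\<forall>A. f (A \<inter> U) = f A)}"

definition op_algebra :: "'w set \<Rightarrow> ('w set \<Rightarrow> 'w set) ring" where
  "op_algebra U = \<lparr>carrier = additive_ops U, monoid.mult = (\<lambda>f g. f), one = (\<lambda>A. {}),
     zero = (\<lambda>A. {}), add = (\<lambda>f g A. sym_diff (f A) (g A))\<rparr>"

definition commutator :: "('w set \<Rightarrow> 'w set) \<Rightarrow> ('w set \<Rightarrow> 'w set) \<Rightarrow> 'w set \<Rightarrow> 'w set" where
  "commutator f g A = sym_diff (f (g A)) (g (f A))"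

lemma additive_opsD:
  assumes "f \<in> additive_ops U"
  shows "f A \<subseteq> U" and "f (sym_diff A B) = sym_diff (f A) (f B)" and "f (A \<inter> U) = f A"
  using assms unfolding additive_ops_def by auto

lemma add_in_additive_ops:
  "f \<in> additive_ops U \<Longrightarrow> g \<in> additive_ops U \<Longrightarrow> (\<lambda>A. sym_diff (f A) (g A)) \<in> additive_ops U"
  by (auto simp: additive_ops_def)

lemma commutator_in_additive_ops:
  "f \<in> additive_ops U \<Longrightarrow> g \<in> additive_ops U \<Longrightarrow> commutator f g \<in> additive_ops U"
  unfolding additive_ops_def commutator_def by auto

lemma abelian_group_op_algebra: "abelian_group (op_algebra U)"
proof (rule abelian_groupI)
  fix x y z
  assume "x \<in> carrier (op_algebra U)" "y \<in> carrier (op_algebra U)"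
  then show "x \<oplus>\<^bsub>op_algebra U\<^esub> y \<in> carrier (op_algebra U)"
    by (simp add: op_algebra_def add_in_additive_ops)
  show "x \<oplus>\<^bsub>op_algebra U\<^esub> y \<oplus>\<^bsub>op_algebra U\<^esub> z = x \<oplus>\<^bsub>op_algebra U\<^esub> (y \<oplus>\<^bsub>op_algebra U\<^esub> z)"
    by (auto simp: op_algebra_def)
  show "x \<oplus>\<^bsub>op_algebra U\<^esub> y = y \<oplus>\<^bsub>op_algebra U\<^esub> x"
    by (auto simp: op_algebra_def)
next
  show "\<zero>\<^bsub>op_algebra U\<^esub> \<in> carrier (op_algebra U)"
    by (simp add: op_algebra_def additive_ops_def)
next
  fix x assume "x \<in> carrier (op_algebra U)"
  then show "\<exists>y\<in>carrier (op_algebra U). y \<oplus>\<^bsub>op_algebra U\<^esub> x = \<zero>\<^bsub>op_algebra U\<^esub>"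
    by (intro bexI[of _ x]) (auto simp: op_algebra_def)
  show "\<zero>\<^bsub>op_algebra U\<^esub> \<oplus>\<^bsub>op_algebra U\<^esub> x = x"
    by (simp add: op_algebra_def)
qed

lemma lie_algebra_Z2_op_algebra: "lie_algebra_Z2 (op_algebra U) commutator"
  unfolding lie_algebra_Z2_def
proof (intro conjI abelian_group_op_algebra ballI)
  fix x y z
  assume "x \<in> carrier (op_algebra U)" "y \<in> carrier (op_algebra U)" "z \<in> carrier (op_algebra U)"
  then have x: "x \<in> additive_ops U" and y: "y \<in> additive_ops U" and z: "z \<in> additive_ops U"
    by (simp_all add: op_algebra_def)
  show "x \<oplus>\<^bsub>op_algebra U\<^esub> x = \<zero>\<^bsub>op_algebra U\<^esub>"
    by (simp add: op_algebra_def)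
  show "commutator x y \<in> carrier (op_algebra U)"
    using x y by (simp add: op_algebra_def commutator_in_additive_ops)
  show "commutator x x = \<zero>\<^bsub>op_algebra U\<^esub>"
    by (simp add: op_algebra_def commutator_def fun_eq_iff)
  show "commutator (x \<oplus>\<^bsub>op_algebra U\<^esub> y) z =
      commutator x z \<oplus>\<^bsub>op_algebra U\<^esub> commutator y z"
    using z by (intro ext) (auto simp: op_algebra_def commutator_def additive_opsD(2))
  show "commutator x (y \<oplus>\<^bsub>op_algebra U\<^esub> z) =
      commutator x y \<oplus>\<^bsub>op_algebra U\<^esub> commutator x z"
    using x by (intro ext) (auto simp: op_algebra_def commutator_def additive_opsD(2))
  show "commutator (commutator x y) z \<oplus>\<^bsub>op_algebra U\<^esub> commutator (commutator y z) x
      \<oplus>\<^bsub>op_algebra U\<^esub> commutator (commutator z x) y = \<zero>\<^bsub>op_algebra U\<^esub>"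
    using x y z by (intro ext) (auto simp: op_algebra_def commutator_def additive_opsD(2))
qed

lemma finite_additive_ops:
  assumes "finite U"
  shows "finite (additive_ops U)"
proof -
  let ?r = "\<lambda>f. restrict f (Pow U)"
  have "inj_on ?r (additive_ops U)"
  proof (rule inj_onI)
    fix f g assume f: "f \<in> additive_ops U" and g: "g \<in> additive_ops U" and fg: "?r f = ?r g"
    show "f = g"
    proof
      fix A
      have "f A = ?r f (A \<inter> U)" using additive_opsD(3)[OF f] by simp
      also have "\<dots> = ?r g (A \<inter> U)" using fg by simp
      also have "\<dots> = g A" using additive_opsD(3)[OF g] by simp
      finally show "f A = g A" .
    qed
  qed
  moreover have "?r f \<in> (\<Pi>\<^sub>E A \<in> Pow U. Pow U)" if "f \<in> additive_ops U" for f
    using additive_opsD(1)[OF that] by (auto simp: PiE_iff)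
  moreover have "finite (\<Pi>\<^sub>E A \<in> Pow U. Pow U)"
    using assms by (intro finite_PiE) auto
  ultimately have "finite (?r ` additive_ops U)" by (meson finite_subset image_subsetI)
  then show ?thesis using \<open>inj_on ?r (additive_ops U)\<close> by (rule finite_imageD)
qed

lemma mem_finsum_op_algebra:
  assumes "finite D" "f \<in> D \<rightarrow> additive_ops U"
  shows "w \<in> finsum (op_algebra U) f D A \<longleftrightarrow> odd (card {t \<in> D. w \<in> f t A})"
  using assms
proof (induction D rule: finite_induct)
  interpret abelian_group "op_algebra U" by (rule abelian_group_op_algebra)
  case empty
  then show ?case using finsum_empty[of f] by (simp add: op_algebra_def)
next
  interpret abelian_group "op_algebra U" by (rule abelian_group_op_algebra)
  case (insert x F)
  have "finsum (op_algebra U) f (insert x F) = f x \<oplus>\<^bsub>op_algebra U\<^esub> finsum (op_algebra U) f F"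
    using insert by (intro finsum_insert) (auto simp: op_algebra_def)
  then have "finsum (op_algebra U) f (insert x F) A = sym_diff (f x A) (finsum (op_algebra U) f F A)"
    by (simp add: op_algebra_def)
  moreover have "card {t \<in> insert x F. w \<in> f t A} =
      (if w \<in> f x A then Suc (card {t \<in> F. w \<in> f t A}) else card {t \<in> F. w \<in> f t A})"
  proof -
    have "{t \<in> insert x F. w \<in> f t A} =
        (if w \<in> f x A then insert x {t \<in> F. w \<in> f t A} else {t \<in> F. w \<in> f t A})"
      by auto
    then show ?thesis using insert.hyps by simp
  qed
  ultimately show ?case using insert by auto
qed

definition bounded_words :: "nat \<Rightarrow> nat list set" where
  "bounded_words n = {w. set w \<subseteq> {1..n} \<and> length w \<le> n}"

definition prepend :: "nat \<Rightarrow> nat \<Rightarrow> nat list set \<Rightarrow> nat list set" where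
  "prepend n i A = (#) i ` {w \<in> A \<inter> bounded_words n. length w < n}"

lemma finite_bounded_words: "finite (bounded_words n)"
  unfolding bounded_words_def using finite_lists_length_le[of "{1..n}" n] by simp

lemma prepend_in_additive_ops: "i \<in> {1..n} \<Longrightarrow> prepend n i \<in> additive_ops (bounded_words n)"
  unfolding additive_ops_def prepend_def bounded_words_def by auto

lemma prepend_singleton: "u \<in> bounded_words n \<Longrightarrow> length u < n \<Longrightarrow> prepend n i {u} = {i # u}"
  by (auto simp: prepend_def)

(* Every word of [X_1, X_b1, ..., X_bk] {u} is p u, and the only possible prefix p beginning with 1
   is 1 b1 ... bk: a letter b \<noteq> 1 prepended by the second summand of a commutator stays in front. *)
lemma foldl_commutator_prepend:
  assumes "set bs \<subseteq> {2..n}" "u \<in> bounded_words n" "length u + length bs < n"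
  shows "(1 # bs) @ u \<in> foldl commutator (prepend n 1) (map (prepend n) bs) {u} \<and>
    (\<forall>w \<in> foldl commutator (prepend n 1) (map (prepend n) bs) {u}.
       \<exists>p. w = p @ u \<and> p \<noteq> [] \<and> (hd p = 1 \<longrightarrow> p = 1 # bs))"
  using assms
proof (induction bs arbitrary: u rule: rev_induct)
  case Nil
  then show ?case by (simp add: prepend_singleton)
next
  case (snoc b bs)
  let ?P = "foldl commutator (prepend n 1) (map (prepend n) bs)"
  have b: "b \<in> {2..n}" and bs: "set bs \<subseteq> {2..n}" using snoc.prems by auto
  have bu: "b # u \<in> bounded_words n" using snoc.prems b by (auto simp: bounded_words_def)
  have IH_bu: "(1 # bs) @ b # u \<in> ?P {b # u} \<and>
      (\<forall>w \<in> ?P {b # u}. \<exists>p. w = p @ b # u \<and> p \<noteq> [] \<and> (hd p = 1 \<longrightarrow> p = 1 # bs))"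
    using snoc.IH[OF bs bu] snoc.prems by simp
  have IH_u: "\<forall>w \<in> ?P {u}. \<exists>p. w = p @ u \<and> p \<noteq> [] \<and> (hd p = 1 \<longrightarrow> p = 1 # bs)"
    using snoc.IH[OF bs snoc.prems(2)] snoc.prems by simp
  have split: "foldl commutator (prepend n 1) (map (prepend n) (bs @ [b])) {u} =
      sym_diff (?P {b # u}) (prepend n b (?P {u}))"
    using snoc.prems by (simp add: commutator_def prepend_singleton)
  have prepend_b: "\<exists>w'. w = b # w' \<and> w' \<in> S" if "w \<in> prepend n b S" for w S
    using that by (auto simp: prepend_def)
  have "b \<noteq> 1" using b by auto
  show ?case
  proof (intro conjI ballI)
    show "(1 # bs @ [b]) @ u \<in> foldl commutator (prepend n 1) (map (prepend n) (bs @ [b])) {u}"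
      unfolding split using IH_bu prepend_b \<open>b \<noteq> 1\<close> by fastforce
  next
    fix w assume "w \<in> foldl commutator (prepend n 1) (map (prepend n) (bs @ [b])) {u}"
    then consider "w \<in> ?P {b # u}" | "w \<in> prepend n b (?P {u})" unfolding split by blast
    then show "\<exists>p. w = p @ u \<and> p \<noteq> [] \<and> (hd p = 1 \<longrightarrow> p = 1 # bs @ [b])"
    proof cases
      case 1
      then obtain p where "w = p @ b # u" "p \<noteq> []" "hd p = 1 \<longrightarrow> p = 1 # bs" using IH_bu by blast
      then show ?thesis by (intro exI[of _ "p @ [b]"]) auto
    next
      case 2
      then obtain w' where "w = b # w'" "w' \<in> ?P {u}" using prepend_b by blast
      moreover obtain p where "w' = p @ u" using IH_u \<open>w' \<in> ?P {u}\<close> by blast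
      ultimately show ?thesis using \<open>b \<noteq> 1\<close> by (intro exI[of _ "b # p"]) auto
    qed
  qed
qed

(* two_jacobi only quantifies over Lie algebras with carrier in nat, so the model is copied along an
   injection of its (finite) carrier into nat. *)
definition transport_ring :: "'b ring \<Rightarrow> ('b \<Rightarrow> nat) \<Rightarrow> nat ring" where
  "transport_ring M h = \<lparr>carrier = h ` carrier M, monoid.mult = (\<lambda>x y. x), one = h \<zero>\<^bsub>M\<^esub>,
     zero = h \<zero>\<^bsub>M\<^esub>, add = (\<lambda>x y. h (inv_into (carrier M) h x \<oplus>\<^bsub>M\<^esub> inv_into (carrier M) h y))\<rparr>"

definition transport_bracket :: "'b ring \<Rightarrow> ('b \<Rightarrow> nat) \<Rightarrow> ('b \<Rightarrow> 'b \<Rightarrow> 'b) \<Rightarrow> nat \<Rightarrow> nat \<Rightarrow> nat" where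
  "transport_bracket M h br x y = h (br (inv_into (carrier M) h x) (inv_into (carrier M) h y))"

context
  fixes M :: "'b ring" and br and h :: "'b \<Rightarrow> nat"
  assumes lie: "lie_algebra_Z2 M br" and inj: "inj_on h (carrier M)"
begin

interpretation M: Z2_lie_algebra M br by (rule Z2_lie_algebraI[OF lie])

lemma transport_add:
  "x \<in> carrier M \<Longrightarrow> y \<in> carrier M \<Longrightarrow> h x \<oplus>\<^bsub>transport_ring M h\<^esub> h y = h (x \<oplus>\<^bsub>M\<^esub> y)"
  using inj by (simp add: transport_ring_def)

lemma transport_bracket_image:
  "x \<in> carrier M \<Longrightarrow> y \<in> carrier M \<Longrightarrow> transport_bracket M h br (h x) (h y) = h (br x y)"
  using inj by (simp add: transport_bracket_def)

lemma lie_algebra_Z2_transport: "lie_algebra_Z2 (transport_ring M h) (transport_bracket M h br)"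
proof -
  have carrier: "carrier (transport_ring M h) = h ` carrier M"
    and zero: "\<zero>\<^bsub>transport_ring M h\<^esub> = h \<zero>\<^bsub>M\<^esub>"
    by (simp_all add: transport_ring_def)
  have "abelian_group (transport_ring M h)"
    by (rule abelian_groupI)
      (auto simp: carrier zero transport_add M.a_ac M.add_self intro!: bexI)
  moreover have "\<forall>x \<in> carrier M. \<forall>y \<in> carrier M. \<forall>z \<in> carrier M.
      h x \<oplus>\<^bsub>transport_ring M h\<^esub> h x = h \<zero>\<^bsub>M\<^esub> \<and>
      transport_bracket M h br (h x) (h y) \<in> h ` carrier M \<and>
      transport_bracket M h br (h x \<oplus>\<^bsub>transport_ring M h\<^esub> h y) (h z) =
        transport_bracket M h br (h x) (h z) \<oplus>\<^bsub>transport_ring M h\<^esub> transport_bracket M h br (h y) (h z) \<and>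
      transport_bracket M h br (h x) (h y \<oplus>\<^bsub>transport_ring M h\<^esub> h z) =
        transport_bracket M h br (h x) (h y) \<oplus>\<^bsub>transport_ring M h\<^esub> transport_bracket M h br (h x) (h z) \<and>
      transport_bracket M h br (h x) (h x) = h \<zero>\<^bsub>M\<^esub> \<and>
      transport_bracket M h br (transport_bracket M h br (h x) (h y)) (h z) \<oplus>\<^bsub>transport_ring M h\<^esub>
        transport_bracket M h br (transport_bracket M h br (h y) (h z)) (h x) \<oplus>\<^bsub>transport_ring M h\<^esub>
        transport_bracket M h br (transport_bracket M h br (h z) (h x)) (h y) = h \<zero>\<^bsub>M\<^esub>"
    by (simp add: transport_add transport_bracket_image M.add_self M.bracket_closed
        M.bracket_add_left M.bracket_add_right M.bracket_self M.jacobi)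
  ultimately show ?thesis
    unfolding lie_algebra_Z2_def carrier zero by simp
qed

lemma finsum_transport:
  "finite D \<Longrightarrow> f \<in> D \<rightarrow> carrier M \<Longrightarrow> finsum (transport_ring M h) (\<lambda>t. h (f t)) D = h (finsum M f D)"
proof (induction D rule: finite_induct)
  interpret T: Z2_lie_algebra "transport_ring M h" "transport_bracket M h br"
    by (rule Z2_lie_algebraI[OF lie_algebra_Z2_transport])
  case empty
  then show ?case using T.finsum_empty by (simp add: transport_ring_def)
next
  interpret T: Z2_lie_algebra "transport_ring M h" "transport_bracket M h br"
    by (rule Z2_lie_algebraI[OF lie_algebra_Z2_transport])
  case (insert x F)
  have "finsum (transport_ring M h) (\<lambda>t. h (f t)) (insert x F) =
      h (f x) \<oplus>\<^bsub>transport_ring M h\<^esub> finsum (transport_ring M h) (\<lambda>t. h (f t)) F"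
    using insert by (intro T.finsum_insert) (auto simp: transport_ring_def)
  also have "\<dots> = h (f x \<oplus>\<^bsub>M\<^esub> finsum M f F)"
    using insert by (simp add: transport_add M.finsum_closed)
  also have "\<dots> = h (finsum M f (insert x F))"
    using insert by (simp add: M.finsum_insert)
  finally show ?case .
qed

lemma lbracket_transport:
  assumes "xs \<noteq> []" "set xs \<subseteq> carrier M"
  shows "lbracket (transport_bracket M h br) (map h xs) = h (lbracket br xs)"
proof -
  have "foldl (transport_bracket M h br) (h x) (map h ys) = h (foldl br x ys)"
    if "x \<in> carrier M" "set ys \<subseteq> carrier M" for x ys
    using that by (induction ys arbitrary: x) (simp_all add: transport_bracket_image M.bracket_closed)
  then show ?thesis using assms by (cases xs) auto
qed

lemma finsum_lbracket_transport:
  assumes "finite D" and xs: "\<And>t. t \<in> D \<Longrightarrow> xs t \<noteq> [] \<and> set (xs t) \<subseteq> carrier M"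
  shows "finsum (transport_ring M h) (\<lambda>t. lbracket (transport_bracket M h br) (map h (xs t))) D =
    h (finsum M (\<lambda>t. lbracket br (xs t)) D)"
proof -
  interpret T: Z2_lie_algebra "transport_ring M h" "transport_bracket M h br"
    by (rule Z2_lie_algebraI[OF lie_algebra_Z2_transport])
  have "finsum (transport_ring M h) (\<lambda>t. lbracket (transport_bracket M h br) (map h (xs t))) D =
      finsum (transport_ring M h) (\<lambda>t. h (lbracket br (xs t))) D"
    using xs by (intro T.finsum_cong') (auto simp: lbracket_transport transport_ring_def M.lbracket_closed)
  also have "\<dots> = h (finsum M (\<lambda>t. lbracket br (xs t)) D)"
    using assms by (intro finsum_transport) (auto intro: M.lbracket_closed)
  finally show ?thesis .
qed

end

section \<open>Reduction to permutations fixing 1\<close>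

definition perm_word :: "nat \<Rightarrow> (nat \<Rightarrow> nat) \<Rightarrow> nat list" where
  "perm_word n \<sigma> = map \<sigma> [1..<n+1]"

definition perms_fixing_one :: "nat \<Rightarrow> (nat \<Rightarrow> nat) set" where
  "perms_fixing_one n = {\<sigma>. \<sigma> permutes {1..n} \<and> \<sigma> 1 = 1}"

lemma perms_fixing_one_subset: "perms_fixing_one n \<subseteq> {\<sigma>. \<sigma> permutes {1..n}}"
  by (auto simp: perms_fixing_one_def)

lemma perm_word_Cons:
  assumes "n \<ge> 1"
  shows "perm_word n \<sigma> = \<sigma> 1 # map \<sigma> [2..<n+1]"
proof -
  have "[1..<n+1] = 1 # [Suc 1..<n+1]" using assms by (intro upt_conv_Cons) simp
  then show ?thesis by (simp add: perm_word_def numeral_2_eq_2 del: upt_Suc)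
qed

lemma perm_word_ne_Nil: "n \<ge> 1 \<Longrightarrow> perm_word n \<sigma> \<noteq> []"
  by (simp add: perm_word_Cons)

lemma
  assumes "\<sigma> permutes {1..n}"
  shows distinct_perm_word: "distinct (perm_word n \<sigma>)"
    and set_perm_word: "set (perm_word n \<sigma>) = {1..n}"
proof -
  have "set [1..<n+1] = {1..n}" by auto
  then show "distinct (perm_word n \<sigma>)" "set (perm_word n \<sigma>) = {1..n}"
    using permutes_inj_on[OF assms] permutes_image[OF assms]
    by (simp_all add: perm_word_def distinct_map)
qed

lemma inj_on_perm_word: "inj_on (perm_word n) {\<sigma>. \<sigma> permutes {1..n}}"
proof (rule inj_onI, rule ext)
  fix \<sigma> \<tau> i
  assume \<sigma>: "\<sigma> \<in> {\<sigma>. \<sigma> permutes {1..n}}" and \<tau>: "\<tau> \<in> {\<sigma>. \<sigma> permutes {1..n}}"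
    and eq: "perm_word n \<sigma> = perm_word n \<tau>"
  show "\<sigma> i = \<tau> i"
  proof (cases "i \<in> {1..n}")
    case True
    then have "i \<in> set [1..<n+1]" by auto
    then show ?thesis using eq unfolding perm_word_def by (metis map_eq_conv)
  next
    case False
    then show ?thesis using \<sigma> \<tau> by (simp add: permutes_not_in)
  qed
qed

lemma perm_word_surj:
  assumes "distinct u" "set u = {1..n}"
  obtains \<sigma> where "\<sigma> permutes {1..n}" "perm_word n \<sigma> = u"
proof -
  have len: "length u = n" using distinct_card[OF assms(1)] assms(2) by simp
  define \<sigma> where "\<sigma> i = (if i \<in> {1..n} then u ! (i - 1) else i)" for i
  have word: "perm_word n \<sigma> = u"
    by (rule nth_equalityI) (simp_all add: perm_word_def \<sigma>_def len nth_upt del: upt_Suc)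
  have "set [1..<n+1] = {1..n}" by auto
  then have image: "\<sigma> ` {1..n} = {1..n}"
    using word assms(2) by (metis perm_word_def set_map)
  then have "inj_on \<sigma> {1..n}" by (intro eq_card_imp_inj_on) auto
  with image have "\<sigma> permutes {1..n}"
    by (intro bij_imp_permutes) (auto simp: bij_betw_def \<sigma>_def)
  with word show ?thesis using that by blast
qed

lemma set_tail_perm_word_fixing_one:
  assumes "\<tau> \<in> perms_fixing_one n"
  shows "set (map \<tau> [2..<n+1]) \<subseteq> {2..n}"
proof
  fix j assume "j \<in> set (map \<tau> [2..<n+1])"
  then obtain i where "i \<in> set [2..<n+1]" "j = \<tau> i" by auto
  then have i: "i \<in> {2..n}" "j = \<tau> i" by (simp_all del: upt_Suc)
  have \<tau>: "\<tau> permutes {1..n}" "\<tau> 1 = 1" using assms by (auto simp: perms_fixing_one_def)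
  then have "j \<in> {1..n}" using i permutes_in_image by fastforce
  moreover have "j \<noteq> 1"
  proof
    assume "j = 1"
    then have "\<tau> i = \<tau> 1" using i \<tau> by simp
    then have "i = 1" using permutes_inj[OF \<tau>(1)] by (simp add: inj_eq)
    then show False using i by simp
  qed
  ultimately show "j \<in> {2..n}" by auto
qed

lemma card_perms_fixing_one:
  assumes "n \<ge> 1"
  shows "card (perms_fixing_one n) = fact (n - 1)"
proof -
  have "perms_fixing_one n = {\<sigma>. \<sigma> permutes {2..n}}"
  proof (intro Set.set_eqI iffI)
    fix \<sigma> assume "\<sigma> \<in> perms_fixing_one n"
    then have \<sigma>: "\<sigma> permutes {1..n}" "\<sigma> 1 = 1" by (auto simp: perms_fixing_one_def)
    have "\<sigma> permutes {2..n}"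
    proof (rule permutes_superset[OF \<sigma>(1)])
      fix x assume "x \<in> {1..n} - {2..n}"
      then have "x = 1" by auto
      then show "\<sigma> x = x" using \<sigma>(2) by simp
    qed
    then show "\<sigma> \<in> {\<sigma>. \<sigma> permutes {2..n}}" by simp
  next
    fix \<sigma> assume "\<sigma> \<in> {\<sigma>. \<sigma> permutes {2..n}}"
    then show "\<sigma> \<in> perms_fixing_one n"
      by (auto simp: perms_fixing_one_def intro: permutes_subset permutes_not_in)
  qed
  then show ?thesis by (simp add: card_permutations)
qed

lemma finite_perms_fixing_one: "finite (perms_fixing_one n)"
  by (rule finite_subset[OF _ finite_permutations[of "{1..n}"]]) (auto simp: perms_fixing_one_def)

lemma split_at_first_occurrence:
  "x \<in> set xs \<Longrightarrow> xs = takeWhile (\<lambda>y. y \<noteq> x) xs @ x # tl (dropWhile (\<lambda>y. y \<noteq> x) xs)"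
  by (induction xs) auto

definition reduced_words :: "nat \<Rightarrow> (nat \<Rightarrow> nat) \<Rightarrow> nat list set" where
  "reduced_words n \<sigma> = (\<lambda>s. 1 # s @ tl (dropWhile (\<lambda>x. x \<noteq> 1) (perm_word n \<sigma>))) `
     expansion (takeWhile (\<lambda>x. x \<noteq> 1) (perm_word n \<sigma>))"

(* For the word xs 1 ys of \<sigma>, [a_xs, a_1] = [a_1, a_xs] expands into the brackets of the words 1 s ys,
   s \<in> expansion xs; these are the permutations fixing 1 that make up reduce n \<sigma>. *)
definition reduce :: "nat \<Rightarrow> (nat \<Rightarrow> nat) \<Rightarrow> (nat \<Rightarrow> nat) set" where
  "reduce n \<sigma> = (if \<sigma> \<in> perms_fixing_one n then {\<sigma>}
     else {\<tau> \<in> perms_fixing_one n. perm_word n \<tau> \<in> reduced_words n \<sigma>})"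

definition reduce_set :: "nat \<Rightarrow> (nat \<Rightarrow> nat) set \<Rightarrow> (nat \<Rightarrow> nat) set" where
  "reduce_set n T = {\<tau> \<in> perms_fixing_one n. odd (card {\<sigma> \<in> T. \<tau> \<in> reduce n \<sigma>})}"

lemma perm_word_split_at_one:
  assumes "\<sigma> permutes {1..n}" "n \<ge> 1" "\<sigma> 1 \<noteq> 1"
  shows "perm_word n \<sigma> =
      takeWhile (\<lambda>x. x \<noteq> 1) (perm_word n \<sigma>) @ 1 # tl (dropWhile (\<lambda>x. x \<noteq> 1) (perm_word n \<sigma>))"
    and "takeWhile (\<lambda>x. x \<noteq> 1) (perm_word n \<sigma>) \<noteq> []"
proof -
  show "perm_word n \<sigma> =
      takeWhile (\<lambda>x. x \<noteq> 1) (perm_word n \<sigma>) @ 1 # tl (dropWhile (\<lambda>x. x \<noteq> 1) (perm_word n \<sigma>))"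
    using assms by (intro split_at_first_occurrence) (simp add: set_perm_word)
  show "takeWhile (\<lambda>x. x \<noteq> 1) (perm_word n \<sigma>) \<noteq> []"
    using assms by (simp add: perm_word_Cons)
qed

lemma reduced_word_is_perm_word:
  assumes \<sigma>: "\<sigma> permutes {1..n}" and n: "n \<ge> 1" and "\<sigma> 1 \<noteq> 1" and u: "u \<in> reduced_words n \<sigma>"
  obtains \<tau> where "\<tau> \<in> perms_fixing_one n" "perm_word n \<tau> = u"
proof -
  let ?xs = "takeWhile (\<lambda>x. x \<noteq> 1) (perm_word n \<sigma>)"
    and ?ys = "tl (dropWhile (\<lambda>x. x \<noteq> 1) (perm_word n \<sigma>))"
  obtain s where s: "s \<in> expansion ?xs" "u = 1 # s @ ?ys" using u by (auto simp: reduced_words_def)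
  have "mset u = mset (?xs @ 1 # ?ys)" using mset_expansion[OF s(1)] s(2) by simp
  also have "\<dots> = mset (perm_word n \<sigma>)"
    using perm_word_split_at_one(1)[OF assms(1-3)] by simp
  finally have mset_u: "mset u = mset (perm_word n \<sigma>)" .
  then have "distinct u" "set u = {1..n}"
    using distinct_perm_word[OF \<sigma>] set_perm_word[OF \<sigma>]
    by (metis mset_eq_imp_distinct_iff, metis set_mset_mset)
  then obtain \<tau> where \<tau>: "\<tau> permutes {1..n}" "perm_word n \<tau> = u" by (rule perm_word_surj)
  then have "\<tau> 1 = 1" using perm_word_Cons[OF n, of \<tau>] s(2) by simp
  with \<tau> show ?thesis using that by (auto simp: perms_fixing_one_def)
qed

lemma reduce_subset: "reduce n \<sigma> \<subseteq> perms_fixing_one n"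
  by (auto simp: reduce_def)

lemma bij_betw_perm_word_reduce:
  assumes \<sigma>: "\<sigma> permutes {1..n}" and n: "n \<ge> 1" and "\<sigma> \<notin> perms_fixing_one n"
  shows "bij_betw (perm_word n) (reduce n \<sigma>) (reduced_words n \<sigma>)"
proof -
  have "\<sigma> 1 \<noteq> 1" using assms by (auto simp: perms_fixing_one_def)
  have reduce: "reduce n \<sigma> = {\<tau> \<in> perms_fixing_one n. perm_word n \<tau> \<in> reduced_words n \<sigma>}"
    using assms(3) by (simp add: reduce_def)
  have "inj_on (perm_word n) (reduce n \<sigma>)"
    using inj_on_perm_word by (rule inj_on_subset) (auto simp: reduce perms_fixing_one_def)
  moreover have "perm_word n ` reduce n \<sigma> = reduced_words n \<sigma>"
  proof
    show "reduced_words n \<sigma> \<subseteq> perm_word n ` reduce n \<sigma>"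
    proof
      fix u assume u: "u \<in> reduced_words n \<sigma>"
      then obtain \<tau> where "\<tau> \<in> perms_fixing_one n" "perm_word n \<tau> = u"
        using reduced_word_is_perm_word[OF \<sigma> n \<open>\<sigma> 1 \<noteq> 1\<close>] by blast
      with u show "u \<in> perm_word n ` reduce n \<sigma>" unfolding reduce by blast
    qed
  qed (auto simp: reduce)
  ultimately show ?thesis by (simp add: bij_betw_def)
qed

lemma reduce_set_subset: "reduce_set n T \<subseteq> perms_fixing_one n"
  by (auto simp: reduce_set_def)

lemma reduce_set_Un_disjoint:
  assumes "finite A" "finite B" "A \<inter> B = {}"
  shows "reduce_set n (A \<union> B) = sym_diff (reduce_set n A) (reduce_set n B)"
proof -
  have "card {\<sigma> \<in> A \<union> B. \<tau> \<in> reduce n \<sigma>} = card {\<sigma> \<in> A. \<tau> \<in> reduce n \<sigma>} + card {\<sigma> \<in> B. \<tau> \<in> reduce n \<sigma>}"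
    for \<tau>
    using assms by (subst card_Un_disjoint[symmetric]) (auto intro: arg_cong[where f = card])
  then show ?thesis by (auto simp: reduce_set_def)
qed

lemma reduce_set_singleton: "reduce_set n {\<sigma>} = reduce n \<sigma>"
proof -
  have "{\<sigma>' \<in> {\<sigma>}. \<tau> \<in> reduce n \<sigma>'} = (if \<tau> \<in> reduce n \<sigma> then {\<sigma>} else {})" for \<tau>
    by auto
  then show ?thesis using reduce_subset[of n \<sigma>] by (auto simp: reduce_set_def)
qed

lemma reduce_set_fixing_one: "B \<subseteq> perms_fixing_one n \<Longrightarrow> reduce_set n B = B"
proof -
  assume B: "B \<subseteq> perms_fixing_one n"
  then have "{\<sigma> \<in> B. \<tau> \<in> reduce n \<sigma>} = (if \<tau> \<in> B then {\<tau>} else {})" for \<tau>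
    by (auto simp: reduce_def)
  then show ?thesis using B by (auto simp: reduce_set_def)
qed

context Z2_lie_algebra
begin

lemma lbracket_perm_word_closed:
  "(\<And>i. a i \<in> carrier R) \<Longrightarrow> n \<ge> 1 \<Longrightarrow> lbracket br (map a (perm_word n \<tau>)) \<in> carrier R"
  by (intro lbracket_closed) (auto simp: perm_word_ne_Nil)

lemma lbracket_perm_word_reduce:
  assumes a: "\<And>i. a i \<in> carrier R" and n: "n \<ge> 1" and \<sigma>: "\<sigma> permutes {1..n}"
  shows "lbracket br (map a (perm_word n \<sigma>)) =
    finsum R (\<lambda>\<tau>. lbracket br (map a (perm_word n \<tau>))) (reduce n \<sigma>)"
proof (cases "\<sigma> \<in> perms_fixing_one n")
  case True
  then show ?thesis using lbracket_perm_word_closed[of a, OF a n] by (simp add: reduce_def)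
next
  case False
  then have "\<sigma> 1 \<noteq> 1" using \<sigma> by (auto simp: perms_fixing_one_def)
  let ?xs = "takeWhile (\<lambda>x. x \<noteq> 1) (perm_word n \<sigma>)"
    and ?ys = "tl (dropWhile (\<lambda>x. x \<noteq> 1) (perm_word n \<sigma>))"
  have "lbracket br (map a (perm_word n \<sigma>)) = lbracket br (map a (?xs @ 1 # ?ys))"
    using arg_cong[OF perm_word_split_at_one(1)[OF \<sigma> n \<open>\<sigma> 1 \<noteq> 1\<close>], of "\<lambda>w. lbracket br (map a w)"] .
  also have "\<dots> = finsum R (\<lambda>u. lbracket br (map a u)) (reduced_words n \<sigma>)"
    unfolding reduced_words_def
    by (rule lbracket_append_Cons_expansion[OF a perm_word_split_at_one(2)[OF \<sigma> n \<open>\<sigma> 1 \<noteq> 1\<close>]])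
  also have "\<dots> = finsum R (\<lambda>u. lbracket br (map a u)) (perm_word n ` reduce n \<sigma>)"
    using bij_betw_imp_surj_on[OF bij_betw_perm_word_reduce[OF \<sigma> n False]] by simp
  also have "\<dots> = finsum R (\<lambda>\<tau>. lbracket br (map a (perm_word n \<tau>))) (reduce n \<sigma>)"
    using lbracket_perm_word_closed[of a, OF a n]
    by (intro finsum_reindex bij_betw_imp_inj_on[OF bij_betw_perm_word_reduce[OF \<sigma> n False]]) auto
  finally show ?thesis .
qed

lemma finsum_perm_words_reduce_set:
  assumes a: "\<And>i. a i \<in> carrier R" and n: "n \<ge> 1"
  shows "finite T \<Longrightarrow> T \<subseteq> {\<sigma>. \<sigma> permutes {1..n}} \<Longrightarrow>
    finsum R (\<lambda>\<tau>. lbracket br (map a (perm_word n \<tau>))) T =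
    finsum R (\<lambda>\<tau>. lbracket br (map a (perm_word n \<tau>))) (reduce_set n T)"
proof (induction T rule: finite_induct)
  case empty
  then show ?case by (simp add: reduce_set_def)
next
  case (insert \<sigma> T)
  let ?f = "\<lambda>\<tau>. lbracket br (map a (perm_word n \<tau>))"
  have f: "?f \<in> A \<rightarrow> carrier R" for A using lbracket_perm_word_closed[of a, OF a n] by blast
  have \<sigma>: "?f \<sigma> = finsum R ?f (reduce n \<sigma>)"
    using insert.prems by (intro lbracket_perm_word_reduce[OF a n]) auto
  have T: "finsum R ?f T = finsum R ?f (reduce_set n T)"
    using insert.prems by (intro insert.IH) auto
  have "finsum R ?f (insert \<sigma> T) = ?f \<sigma> \<oplus> finsum R ?f T"
    using insert.hyps f by (intro finsum_insert) auto
  also have "\<dots> = finsum R ?f (reduce n \<sigma>) \<oplus> finsum R ?f (reduce_set n T)"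
    by (simp only: \<sigma> T)
  also have "\<dots> = finsum R ?f (sym_diff (reduce n \<sigma>) (reduce_set n T))"
    by (rule finsum_sym_diff[symmetric])
      (simp_all add: f finite_subset[OF reduce_subset finite_perms_fixing_one]
        finite_subset[OF reduce_set_subset finite_perms_fixing_one])
  also have "\<dots> = finsum R ?f (reduce_set n (insert \<sigma> T))"
    using reduce_set_Un_disjoint[of "{\<sigma>}" T n] insert.hyps by (simp add: reduce_set_singleton)
  finally show ?case .
qed

lemma finsum_lbracket_reduce_set:
  assumes n: "n \<ge> 1" and a: "\<forall>i\<in>{1..n}. a i \<in> carrier R" and T: "T \<subseteq> {\<sigma>. \<sigma> permutes {1..n}}"
  shows "finsum R (\<lambda>\<sigma>. lbracket br (map (\<lambda>i. a (\<sigma> i)) [1..<n+1])) T =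
    finsum R (\<lambda>\<sigma>. lbracket br (map (\<lambda>i. a (\<sigma> i)) [1..<n+1])) (reduce_set n T)"
proof -
  define a' where "a' i = (if i \<in> {1..n} then a i else \<zero>)" for i
  have a': "a' i \<in> carrier R" for i using a by (simp add: a'_def)
  have total: "finsum R (\<lambda>\<sigma>. lbracket br (map (\<lambda>i. a (\<sigma> i)) [1..<n+1])) S =
      finsum R (\<lambda>\<sigma>. lbracket br (map a' (perm_word n \<sigma>))) S"
    if "S \<subseteq> {\<sigma>. \<sigma> permutes {1..n}}" for S
  proof (rule finsum_cong')
    fix \<sigma> assume "\<sigma> \<in> S"
    then have "set (perm_word n \<sigma>) = {1..n}" using that by (intro set_perm_word) auto
    then have "map a' (perm_word n \<sigma>) = map a (perm_word n \<sigma>)" by (simp add: a'_def)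
    then have "map (\<lambda>i. a (\<sigma> i)) [1..<n+1] = map a' (perm_word n \<sigma>)"
      by (simp add: perm_word_def comp_def del: upt_Suc)
    then show "lbracket br (map (\<lambda>i. a (\<sigma> i)) [1..<n+1]) = lbracket br (map a' (perm_word n \<sigma>))"
      by (rule arg_cong)
  qed (use lbracket_perm_word_closed[of a', OF a' n] in auto)
  have "finite T" using T by (rule finite_subset) (simp add: finite_permutations)
  have "reduce_set n T \<subseteq> {\<sigma>. \<sigma> permutes {1..n}}"
    using reduce_set_subset by (auto simp: perms_fixing_one_def)
  have "finsum R (\<lambda>\<sigma>. lbracket br (map (\<lambda>i. a (\<sigma> i)) [1..<n+1])) T =
      finsum R (\<lambda>\<sigma>. lbracket br (map a' (perm_word n \<sigma>))) T"
    using T by (rule total)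
  also have "\<dots> = finsum R (\<lambda>\<sigma>. lbracket br (map a' (perm_word n \<sigma>))) (reduce_set n T)"
    using \<open>finite T\<close> T by (rule finsum_perm_words_reduce_set[OF a' n])
  also have "\<dots> = finsum R (\<lambda>\<sigma>. lbracket br (map (\<lambda>i. a (\<sigma> i)) [1..<n+1])) (reduce_set n T)"
    using \<open>reduce_set n T \<subseteq> {\<sigma>. \<sigma> permutes {1..n}}\<close> by (rule total[symmetric])
  finally show ?thesis .
qed

end

section \<open>Independence of the brackets beginning with a_1\<close>

lemma lbracket_prepend_perm_word_closed:
  assumes "n \<ge> 1" "\<sigma> permutes {1..n}"
  shows "lbracket commutator (map (prepend n) (perm_word n \<sigma>)) \<in> carrier (op_algebra (bounded_words n))"
proof -
  interpret Z2_lie_algebra "op_algebra (bounded_words n)" commutator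
    by (rule Z2_lie_algebraI[OF lie_algebra_Z2_op_algebra])
  show ?thesis
    using assms prepend_in_additive_ops
    by (intro lbracket_closed) (auto simp: perm_word_ne_Nil set_perm_word op_algebra_def)
qed

lemma finsum_prepend_brackets_ne_zero:
  assumes n: "n \<ge> 1" and D: "D \<subseteq> perms_fixing_one n" "D \<noteq> {}"
  shows "finsum (op_algebra (bounded_words n))
      (\<lambda>\<tau>. lbracket commutator (map (prepend n) (perm_word n \<tau>))) D \<noteq> \<zero>\<^bsub>op_algebra (bounded_words n)\<^esub>"
proof
  let ?M = "op_algebra (bounded_words n)"
  let ?B = "\<lambda>\<tau>. lbracket commutator (map (prepend n) (perm_word n \<tau>))"
  assume zero: "finsum ?M ?B D = \<zero>\<^bsub>?M\<^esub>"
  have leading: "perm_word n \<tau> \<in> ?B \<tau> {[]} \<and> (\<forall>w \<in> ?B \<tau> {[]}. hd w = 1 \<longrightarrow> w = perm_word n \<tau>)"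
    if \<tau>: "\<tau> \<in> perms_fixing_one n" for \<tau>
  proof -
    have "perm_word n \<tau> = 1 # map \<tau> [2..<n+1]"
      using \<tau> n by (simp add: perm_word_Cons perms_fixing_one_def)
    moreover have "set (map \<tau> [2..<n+1]) \<subseteq> {2..n}" using \<tau> by (rule set_tail_perm_word_fixing_one)
    note foldl_commutator_prepend[OF this, of "[]"]
    ultimately show ?thesis using n by (auto simp: bounded_words_def)
  qed
  obtain \<tau>\<^sub>0 where \<tau>\<^sub>0: "\<tau>\<^sub>0 \<in> D" using D(2) by blast
  have "{\<tau> \<in> D. perm_word n \<tau>\<^sub>0 \<in> ?B \<tau> {[]}} = {\<tau>\<^sub>0}"
  proof (intro Set.set_eqI iffI)
    fix \<tau> assume "\<tau> \<in> {\<tau> \<in> D. perm_word n \<tau>\<^sub>0 \<in> ?B \<tau> {[]}}"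
    moreover have "hd (perm_word n \<tau>\<^sub>0) = 1"
      using \<tau>\<^sub>0 D(1) n by (auto simp: perm_word_Cons perms_fixing_one_def)
    ultimately have "\<tau> \<in> D" "perm_word n \<tau>\<^sub>0 = perm_word n \<tau>" using leading D(1) by blast+
    then show "\<tau> \<in> {\<tau>\<^sub>0}"
      using \<tau>\<^sub>0 D(1) inj_on_perm_word[of n] by (auto simp: perms_fixing_one_def inj_on_def)
  qed (use \<tau>\<^sub>0 leading D(1) in blast)
  moreover have "?B \<in> D \<rightarrow> additive_ops (bounded_words n)"
    using D(1) lbracket_prepend_perm_word_closed[OF n]
    by (auto simp: perms_fixing_one_def op_algebra_def)
  moreover have "finite D"
    using D(1) finite_perms_fixing_one by (rule finite_subset)
  ultimately have "perm_word n \<tau>\<^sub>0 \<in> finsum ?M ?B D {[]}" by (simp add: mem_finsum_op_algebra)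
  then show False using zero by (simp add: op_algebra_def)
qed

lemma nat_lie_algebra_with_independent_brackets:
  assumes n: "n \<ge> 1"
  obtains R :: "nat ring" and br a where "lie_algebra_Z2 R br" "\<forall>i\<in>{1..n}. a i \<in> carrier R"
    and "\<And>D. D \<subseteq> perms_fixing_one n \<Longrightarrow> D \<noteq> {} \<Longrightarrow>
      finsum R (\<lambda>\<tau>. lbracket br (map (\<lambda>i. a (\<tau> i)) [1..<n+1])) D \<noteq> \<zero>\<^bsub>R\<^esub>"
proof -
  let ?M = "op_algebra (bounded_words n)"
  let ?B = "\<lambda>\<tau>. lbracket commutator (map (prepend n) (perm_word n \<tau>))"
  have lie: "lie_algebra_Z2 ?M commutator" by (rule lie_algebra_Z2_op_algebra)
  interpret M: Z2_lie_algebra ?M commutator by (rule Z2_lie_algebraI[OF lie])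
  obtain h :: "(nat list set \<Rightarrow> nat list set) \<Rightarrow> nat" where "inj_on h (additive_ops (bounded_words n))"
    using finite_imp_inj_to_nat_seg[OF finite_additive_ops[OF finite_bounded_words[of n]]] by blast
  then have h: "inj_on h (carrier ?M)" by (simp add: op_algebra_def)
  define a where "a i = h (prepend n i)" for i
  show thesis
  proof (rule that[of "transport_ring ?M h" "transport_bracket ?M h commutator" a])
    show "lie_algebra_Z2 (transport_ring ?M h) (transport_bracket ?M h commutator)"
      by (rule lie_algebra_Z2_transport[OF lie h])
    show "\<forall>i\<in>{1..n}. a i \<in> carrier (transport_ring ?M h)"
      using prepend_in_additive_ops by (simp add: a_def transport_ring_def op_algebra_def)
  next
    fix D assume D: "D \<subseteq> perms_fixing_one n" "D \<noteq> {}"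
    then have perms: "\<tau> permutes {1..n}" if "\<tau> \<in> D" for \<tau>
      using that by (auto simp: perms_fixing_one_def)
    have "map (\<lambda>i. a (\<tau> i)) [1..<n+1] = map h (map (prepend n) (perm_word n \<tau>))" for \<tau>
      by (simp add: a_def perm_word_def del: upt_Suc)
    moreover have "finsum (transport_ring ?M h)
        (\<lambda>\<tau>. lbracket (transport_bracket ?M h commutator) (map h (map (prepend n) (perm_word n \<tau>)))) D =
      h (finsum ?M ?B D)"
      using finite_subset[OF D(1) finite_perms_fixing_one] perms n prepend_in_additive_ops
      by (intro finsum_lbracket_transport[OF lie h])
        (auto simp: perm_word_ne_Nil set_perm_word op_algebra_def)
    moreover have "finsum ?M ?B D \<in> carrier ?M"
      using perms lbracket_prepend_perm_word_closed[OF n] by (intro M.finsum_closed) auto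
    ultimately show "finsum (transport_ring ?M h)
        (\<lambda>\<tau>. lbracket (transport_bracket ?M h commutator) (map (\<lambda>i. a (\<tau> i)) [1..<n+1])) D \<noteq>
      \<zero>\<^bsub>transport_ring ?M h\<^esub>"
      using finsum_prepend_brackets_ne_zero[OF n D] inj_onD[OF h]
      by (auto simp: transport_ring_def)
  qed
qed

lemma two_jacobi_iff:
  assumes n: "n \<ge> 1"
  shows "two_jacobi n T \<longleftrightarrow> T \<subseteq> {\<sigma>. \<sigma> permutes {1..n}} \<and> reduce_set n T = {}"
proof
  assume jacobi: "two_jacobi n T"
  then have T: "T \<subseteq> {\<sigma>. \<sigma> permutes {1..n}}" by (simp add: two_jacobi_def)
  obtain R :: "nat ring" and br a where lie: "lie_algebra_Z2 R br" and a: "\<forall>i\<in>{1..n}. a i \<in> carrier R"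
    and indep: "\<And>D. D \<subseteq> perms_fixing_one n \<Longrightarrow> D \<noteq> {} \<Longrightarrow>
      finsum R (\<lambda>\<tau>. lbracket br (map (\<lambda>i. a (\<tau> i)) [1..<n+1])) D \<noteq> \<zero>\<^bsub>R\<^esub>"
    using nat_lie_algebra_with_independent_brackets[OF n] by blast
  have "finsum R (\<lambda>\<sigma>. lbracket br (map (\<lambda>i. a (\<sigma> i)) [1..<n+1])) (reduce_set n T) =
      finsum R (\<lambda>\<sigma>. lbracket br (map (\<lambda>i. a (\<sigma> i)) [1..<n+1])) T"
    by (rule Z2_lie_algebra.finsum_lbracket_reduce_set[OF Z2_lie_algebraI[OF lie] n a T, symmetric])
  also have "\<dots> = \<zero>\<^bsub>R\<^esub>" using jacobi lie a by (simp add: two_jacobi_def)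
  finally show "T \<subseteq> {\<sigma>. \<sigma> permutes {1..n}} \<and> reduce_set n T = {}"
    using T indep[OF reduce_set_subset] by blast
next
  assume T: "T \<subseteq> {\<sigma>. \<sigma> permutes {1..n}} \<and> reduce_set n T = {}"
  show "two_jacobi n T"
    unfolding two_jacobi_def
  proof (intro conjI allI impI)
    fix R :: "nat ring" and br a
    assume lie: "lie_algebra_Z2 R br" and a: "\<forall>i\<in>{1..n}. a i \<in> carrier R"
    interpret Z2_lie_algebra R br by (rule Z2_lie_algebraI[OF lie])
    show "finsum R (\<lambda>\<sigma>. lbracket br (map (\<lambda>i. a (\<sigma> i)) [1..<n+1])) T = \<zero>\<^bsub>R\<^esub>"
      using finsum_lbracket_reduce_set[OF n a] T by simp
  qed (use T in blast)
qed

section \<open>Counting\<close>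

lemma reduce_set_eq_sym_diff:
  assumes "T \<subseteq> {\<sigma>. \<sigma> permutes {1..n}}"
  shows "reduce_set n T = sym_diff (reduce_set n (T - perms_fixing_one n)) (T \<inter> perms_fixing_one n)"
proof -
  have "finite T" using assms by (rule finite_subset) (simp add: finite_permutations)
  then have "reduce_set n ((T - perms_fixing_one n) \<union> (T \<inter> perms_fixing_one n)) =
      sym_diff (reduce_set n (T - perms_fixing_one n)) (reduce_set n (T \<inter> perms_fixing_one n))"
    by (intro reduce_set_Un_disjoint) auto
  then show ?thesis by (simp add: Un_Diff_Int reduce_set_fixing_one)
qed

lemma bij_betw_reduction_free_sets:
  "bij_betw (\<lambda>A. A \<union> reduce_set n A) (Pow ({\<sigma>. \<sigma> permutes {1..n}} - perms_fixing_one n))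
     {T. T \<subseteq> {\<sigma>. \<sigma> permutes {1..n}} \<and> reduce_set n T = {}}"
proof (rule bij_betw_byWitness[where f' = "\<lambda>T. T - perms_fixing_one n"])
  show "\<forall>A \<in> Pow ({\<sigma>. \<sigma> permutes {1..n}} - perms_fixing_one n).
      A \<union> reduce_set n A - perms_fixing_one n = A"
    using reduce_set_subset by blast
  show "\<forall>T \<in> {T. T \<subseteq> {\<sigma>. \<sigma> permutes {1..n}} \<and> reduce_set n T = {}}.
      T - perms_fixing_one n \<union> reduce_set n (T - perms_fixing_one n) = T"
    using reduce_set_eq_sym_diff by blast
  show "(\<lambda>A. A \<union> reduce_set n A) ` Pow ({\<sigma>. \<sigma> permutes {1..n}} - perms_fixing_one n) \<subseteq>
      {T. T \<subseteq> {\<sigma>. \<sigma> permutes {1..n}} \<and> reduce_set n T = {}}"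
  proof clarify
    fix A assume A: "A \<subseteq> {\<sigma>. \<sigma> permutes {1..n}} - perms_fixing_one n"
    have "A \<union> reduce_set n A \<subseteq> {\<sigma>. \<sigma> permutes {1..n}}"
      using A reduce_set_subset perms_fixing_one_subset by blast
    moreover have "A \<union> reduce_set n A - perms_fixing_one n = A"
      and "(A \<union> reduce_set n A) \<inter> perms_fixing_one n = reduce_set n A"
      using A reduce_set_subset[of n A] by blast+
    ultimately have "reduce_set n (A \<union> reduce_set n A) = sym_diff (reduce_set n A) (reduce_set n A)"
      by (simp only: reduce_set_eq_sym_diff)
    then have "reduce_set n (A \<union> reduce_set n A) = {}" by simp
    with \<open>A \<union> reduce_set n A \<subseteq> {\<sigma>. \<sigma> permutes {1..n}}\<close>
    show "A \<union> reduce_set n A \<subseteq> {\<sigma>. \<sigma> permutes {1..n}} \<and> reduce_set n (A \<union> reduce_set n A) = {}"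
      by blast
  qed
  show "(\<lambda>T. T - perms_fixing_one n) ` {T. T \<subseteq> {\<sigma>. \<sigma> permutes {1..n}} \<and> reduce_set n T = {}} \<subseteq>
      Pow ({\<sigma>. \<sigma> permutes {1..n}} - perms_fixing_one n)"
    by blast
qed

lemma fact_diff_fact_pred:
  assumes "n \<ge> 1"
  shows "fact n - fact (n - 1) = fact (n - 1) * (n - 1 :: nat)"
proof -
  obtain m where "n = Suc m" using assms by (cases n) auto
  then show ?thesis by (simp add: algebra_simps)
qed

theorem corollary2:
  fixes n :: nat
  assumes "n \<ge> 2"
  shows "card {T. two_jacobi n T} = 2 ^ (fact (n - 1) * (n - 1))"
proof -
  let ?P = "{\<sigma>. \<sigma> permutes {1..n}}" and ?L = "perms_fixing_one n"
  have n: "n \<ge> 1" using assms by simp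
  have "card {T. two_jacobi n T} = card {T. T \<subseteq> ?P \<and> reduce_set n T = {}}"
    using two_jacobi_iff[OF n] by simp
  also have "\<dots> = card (Pow (?P - ?L))"
    using bij_betw_reduction_free_sets by (rule bij_betw_same_card[symmetric])
  also have "\<dots> = 2 ^ (card ?P - card ?L)"
    using card_Diff_subset[OF finite_perms_fixing_one perms_fixing_one_subset]
    by (simp add: card_Pow finite_permutations)
  also have "card ?P - card ?L = fact n - fact (n - 1)"
    using n by (simp add: card_permutations card_perms_fixing_one)
  also have "\<dots> = fact (n - 1) * (n - 1)"
    using n by (rule fact_diff_fact_pred)
  finally show ?thesis .
qed

end
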